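(* Let $(\mathfrak{X},\pi)$, $a$, $s$, $S$, $m$ be as in the context. Let $z\in\mathbb{H}$, $\Phi>0$, and let $\Gamma_\Phi:(0,\infty)\to(0,\infty)$ be the strictly increasing function \[ \Gamma_\Phi(\tau):=\inf_{x\in\mathfrak{X}}\int_{\mathfrak{X}}\frac{\pi(\mathrm{d}y)}{\big(\tau^{-1}+|a_x-a_y|+\|S_x-S_y\|_2\,\Phi\big)^2}. \] If $\|m(z)\|_2\le\Phi$ and $\lim_{\tau\to\infty}\Gamma_\Phi(\tau)>\Phi^2$, then \[ \|m(z)\|\le(\Gamma_\Phi)^{-1}(\Phi^2). \]
   Context: Let $(\mathfrak{X},\pi)$ be a measure space where $\pi$ is a probability measure; $\mathcal{B}(\mathfrak{X},\mathbb{D})$ denotes bounded measurable $\mathbb{D}$-valued functions with sup norm $\|w\|=\sup_x|w_x|$; $\|\cdot\|_2$ is the norm of $L^2(\mathfrak{X},\pi)$. Let $a\in\mathcal{B}(\mathfrak{X},\mathbb{R})$, $s\in\mathcal{B}(\mathfrak{X}^2,[0,\infty))$ symmetric, $(Sw)_x=\int s_{xy}w_y\,\pi(\mathrm{d}y)$, $S_x:=(y\mapsto s_{xy})$. $m:\mathbb{H}\to\mathcal{B}(\mathfrak{X},\mathbb{H})$ is the unique solution of $-1/m(z)=z+a+Sm(z)$, $z\in\mathbb{H}$ (upper half-plane). *)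

theory Defs
  imports "HOL-Probability.Probability"
begin

definition L2norm :: "'a measure \<Rightarrow> ('a \<Rightarrow> 'b::real_normed_vector) \<Rightarrow> real" where
  "L2norm M w = sqrt (\<integral>x. (norm (w x))\<^sup>2 \<partial>M)"

definition supnorm :: "'a measure \<Rightarrow> ('a \<Rightarrow> 'b::real_normed_vector) \<Rightarrow> real" where
  "supnorm M w = (SUP x\<in>space M. norm (w x))"

definition Sop :: "'a measure \<Rightarrow> ('a \<Rightarrow> 'a \<Rightarrow> real) \<Rightarrow> ('a \<Rightarrow> complex) \<Rightarrow> 'a \<Rightarrow> complex" where
  "Sop M s w x = (\<integral>y. complex_of_real (s x y) * w y \<partial>M)"

definition Gamma :: "'a measure \<Rightarrow> ('a \<Rightarrow> real) \<Rightarrow> ('a \<Rightarrow> 'a \<Rightarrow> real) \<Rightarrow> real \<Rightarrow> real \<Rightarrow> real" where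
  "Gamma M a s \<Phi> \<tau> = (INF x\<in>space M. \<integral>y. 1 / (1 / \<tau> + \<bar>a x - a y\<bar>
        + L2norm M (\<lambda>t. s x t - s y t) * \<Phi>)\<^sup>2 \<partial>M)"

end

theory Submission
  imports Defs
begin

text \<open>
  Subtracting the equation \<open>-1/m = z + a + Sm\<close> at two points \<open>x, y\<close> and estimating
  \<open>|(Sm)\<^sub>x - (Sm)\<^sub>y| \<le> \<parallel>S\<^sub>x - S\<^sub>y\<parallel>\<^sub>2 \<parallel>m\<parallel>\<^sub>2\<close> by Cauchy-Schwarz gives
  \<open>1/|m\<^sub>y| \<le> 1/|m\<^sub>x| + c\<^sub>x\<^sub>y\<close> with \<open>c\<^sub>x\<^sub>y = |a\<^sub>x - a\<^sub>y| + \<parallel>S\<^sub>x - S\<^sub>y\<parallel>\<^sub>2 \<Phi>\<close>.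
  Squaring, inverting and integrating over \<open>y\<close> yields \<open>\<Gamma>\<^sub>\<Phi>(|m\<^sub>x|) \<le> \<parallel>m\<parallel>\<^sub>2\<^sup>2 \<le> \<Phi>\<^sup>2\<close>.
  Since \<open>c\<close> is bounded, \<open>\<Gamma>\<^sub>\<Phi>\<close> increases strictly (with a rate uniform in \<open>x\<close>), is
  continuous, lies below \<open>\<tau>\<^sup>2\<close> and exceeds \<open>\<Phi>\<^sup>2\<close> for large \<open>\<tau>\<close>; hence \<open>\<Phi>\<^sup>2\<close> is a
  value of \<open>\<Gamma>\<^sub>\<Phi>\<close> and \<open>|m\<^sub>x| \<le> \<Gamma>\<^sub>\<Phi>\<^sup>-\<^sup>1(\<Phi>\<^sup>2)\<close>.
\<close>

lemma inverse_sq_shift_eq: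
  fixes \<tau> c :: real
  assumes "0 < \<tau>" "0 \<le> c"
  shows "1 / (1/\<tau> + c)\<^sup>2 = (\<tau> / (1 + c*\<tau>))\<^sup>2"
  using assms by (simp add: field_simps power2_eq_square)

lemma inverse_sq_shift_le_sq:
  fixes \<tau> c :: real
  assumes "0 < \<tau>" "0 \<le> c"
  shows "1 / (1/\<tau> + c)\<^sup>2 \<le> \<tau>\<^sup>2"
proof -
  have "\<tau> / (1 + c*\<tau>) \<le> \<tau>"
    using assms by (simp add: divide_le_eq)
  then show ?thesis
    using assms by (simp add: inverse_sq_shift_eq power_mono)
qed

lemma inverse_sq_shift_le_sq_of_inverse_le:
  fixes u v c :: real
  assumes "0 < u" "0 < v" "0 \<le> c" "1/u \<le> 1/v + c"
  shows "1 / (1/v + c)\<^sup>2 \<le> u\<^sup>2"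
proof -
  have "(1/u)\<^sup>2 \<le> (1/v + c)\<^sup>2"
    using assms by (intro power_mono) auto
  moreover have "0 < 1/v + c"
    using assms by (simp add: add_pos_nonneg)
  ultimately have "1 / (1/v + c)\<^sup>2 \<le> 1 / (1/u)\<^sup>2"
    using assms by (intro divide_left_mono) auto
  then show ?thesis by (simp add: power_divide)
qed

lemma inverse_sq_shift_increment_le:
  fixes t t' c :: real
  assumes "0 < t" "t \<le> t'" "0 \<le> c"
  shows "1 / (1/t' + c)\<^sup>2 - 1 / (1/t + c)\<^sup>2 \<le> t'\<^sup>2 - t\<^sup>2"
proof -
  define h h' where "h = t / (1 + c*t)" and "h' = t' / (1 + c*t')"
  have "1 \<le> 1 + c*t" "1 \<le> 1 + c*t'"
    using assms by auto
  then have diff: "h' - h = (t' - t) / ((1 + c*t) * (1 + c*t'))"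
    unfolding h_def h'_def by (simp add: field_simps)
  have "1 * 1 \<le> (1 + c*t) * (1 + c*t')"
    using \<open>1 \<le> 1 + c*t\<close> \<open>1 \<le> 1 + c*t'\<close> by (intro mult_mono) auto
  then have "h' - h \<le> (t' - t) / 1"
    unfolding diff using assms by (intro divide_left_mono) auto
  moreover have "0 \<le> h' - h"
    unfolding diff using assms \<open>1 * 1 \<le> _\<close> by simp
  moreover have "h \<le> t" "h' \<le> t'" "0 \<le> h"
    unfolding h_def h'_def using assms \<open>1 \<le> 1 + c*t\<close> \<open>1 \<le> 1 + c*t'\<close>
    by (simp_all add: divide_le_eq)
  ultimately have "(h' - h) * (h' + h) \<le> (t' - t) * (t' + t)"
    by (intro mult_mono) auto
  moreover have "0 < t'"
    using assms by linarith
  ultimately show ?thesis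
    using assms unfolding inverse_sq_shift_eq[OF \<open>0 < t'\<close> \<open>0 \<le> c\<close>] inverse_sq_shift_eq[OF \<open>0 < t\<close> \<open>0 \<le> c\<close>]
    by (simp add: h_def h'_def power2_eq_square algebra_simps)
qed

lemma inverse_sq_shift_increment_ge:
  fixes t t' c C :: real
  assumes "0 < t" "t \<le> t'" "0 \<le> c" "c \<le> C"
  shows "(t' - t) * t' / ((1 + C*t) * (1 + C*t')\<^sup>2) \<le> 1 / (1/t' + c)\<^sup>2 - 1 / (1/t + c)\<^sup>2"
proof -
  define h h' where "h = t / (1 + c*t)" and "h' = t' / (1 + c*t')"
  have ge: "1 \<le> 1 + c*t" "1 + c*t \<le> 1 + C*t" "1 \<le> 1 + c*t'" "1 + c*t' \<le> 1 + C*t'"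
    using assms by (auto intro: mult_right_mono)
  then have pos: "0 < 1 + c*t" "0 < 1 + C*t" "0 < 1 + c*t'" "0 < 1 + C*t'"
    by linarith+
  have "(t' - t) / ((1 + C*t) * (1 + C*t')) \<le> (t' - t) / ((1 + c*t) * (1 + c*t'))"
    using ge pos assms by (intro divide_left_mono mult_mono mult_pos_pos) auto
  also have "\<dots> = h' - h"
    using pos unfolding h_def h'_def by (simp add: field_simps)
  finally have low: "(t' - t) / ((1 + C*t) * (1 + C*t')) \<le> h' - h" .
  have "t' / (1 + C*t') \<le> h'"
    unfolding h'_def using ge pos assms by (intro divide_left_mono) auto
  moreover have "0 \<le> h" "0 \<le> (t' - t) / ((1 + C*t) * (1 + C*t'))" "0 \<le> t' / (1 + C*t')"
    using pos assms unfolding h_def by auto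
  ultimately have "(t' - t) / ((1 + C*t) * (1 + C*t')) * (t' / (1 + C*t')) \<le> (h' - h) * (h' + h)"
    using low by (intro mult_mono) auto
  moreover have "0 < t'"
    using assms by linarith
  ultimately show ?thesis
    unfolding inverse_sq_shift_eq[OF \<open>0 < t'\<close> \<open>0 \<le> c\<close>] inverse_sq_shift_eq[OF \<open>0 < t\<close> \<open>0 \<le> c\<close>]
    by (simp add: h_def h'_def power2_eq_square algebra_simps)
qed

lemma continuous_on_if_dist_le:
  fixes f :: "'a::metric_space \<Rightarrow> 'b::metric_space" and g :: "'a \<Rightarrow> 'c::metric_space"
  assumes "continuous_on S g" and "\<And>x y. x \<in> S \<Longrightarrow> y \<in> S \<Longrightarrow> dist (f x) (f y) \<le> dist (g x) (g y)"
  shows "continuous_on S f"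
  using assms unfolding continuous_on_iff by (meson le_less_trans)

lemma cINF_diff_bounds:
  fixes f g :: "'a \<Rightarrow> real"
  assumes "X \<noteq> {}" "bdd_below (f ` X)" "bdd_below (g ` X)"
    and "\<And>x. x \<in> X \<Longrightarrow> d \<le> g x - f x" "\<And>x. x \<in> X \<Longrightarrow> g x - f x \<le> e"
  shows "d \<le> (INF x\<in>X. g x) - (INF x\<in>X. f x)" "(INF x\<in>X. g x) - (INF x\<in>X. f x) \<le> e"
proof -
  have "(INF x\<in>X. f x) + d \<le> (INF x\<in>X. g x)"
  proof (rule cINF_greatest[OF assms(1)])
    fix x assume "x \<in> X"
    then show "(INF x\<in>X. f x) + d \<le> g x"
      using cINF_lower[OF assms(2)] assms(4) by fastforce
  qed
  then show "d \<le> (INF x\<in>X. g x) - (INF x\<in>X. f x)" by simp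
  have "(INF x\<in>X. g x) - e \<le> (INF x\<in>X. f x)"
  proof (rule cINF_greatest[OF assms(1)])
    fix x assume "x \<in> X"
    then show "(INF x\<in>X. g x) - e \<le> f x"
      using cINF_lower[OF assms(3)] assms(5) by fastforce
  qed
  then show "(INF x\<in>X. g x) - (INF x\<in>X. f x) \<le> e" by simp
qed

lemma le_inv_into_if_strict_mono_on:
  fixes f :: "real \<Rightarrow> real"
  assumes mono: "strict_mono_on {0<..} f" and cont: "continuous_on {0<..} f"
    and "0 < \<epsilon>" "f \<epsilon> < v" "0 < T" "v < f T" and "0 < u" "f u \<le> v"
  shows "u \<le> inv_into {0<..} f v"
proof -
  have "\<epsilon> \<le> T"
  proof (rule ccontr)
    assume "\<not> \<epsilon> \<le> T"
    then have "f T \<le> f \<epsilon>"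
      using strict_mono_on_leD[OF mono] \<open>0 < T\<close> by simp
    then show False
      using \<open>f \<epsilon> < v\<close> \<open>v < f T\<close> by linarith
  qed
  moreover have "continuous_on {\<epsilon>..T} f"
    using \<open>0 < \<epsilon>\<close> by (intro continuous_on_subset[OF cont]) auto
  ultimately obtain \<tau> where "\<epsilon> \<le> \<tau>" "f \<tau> = v"
    using IVT'[of f \<epsilon> v T] \<open>f \<epsilon> < v\<close> \<open>v < f T\<close> by auto
  then have img: "v \<in> f ` {0<..}"
    using \<open>0 < \<epsilon>\<close> by (intro image_eqI[of _ _ \<tau>]) auto
  show ?thesis
  proof (rule ccontr)
    assume "\<not> u \<le> inv_into {0<..} f v"
    then have "f (inv_into {0<..} f v) < f u"
      using strict_mono_onD[OF mono] inv_into_into[OF img] \<open>0 < u\<close> by simp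
    then show False
      using f_inv_into_f[OF img] \<open>f u \<le> v\<close> by simp
  qed
qed

lemma exists_gt_of_tendsto_ereal:
  fixes f :: "real \<Rightarrow> real"
  assumes "((\<lambda>\<tau>. ereal (f \<tau>)) \<longlongrightarrow> L) at_top" "ereal v < L"
  obtains T where "0 < T" "v < f T"
proof -
  have "eventually (\<lambda>\<tau>. ereal v < ereal (f \<tau>)) at_top"
    using order_tendstoD(1)[OF assms] .
  then obtain N where "\<And>\<tau>. N \<le> \<tau> \<Longrightarrow> v < f \<tau>"
    by (auto simp: eventually_at_top_linorder)
  then show ?thesis
    using that[of "max N 1"] by simp
qed

lemma L2norm_nonneg: "0 \<le> L2norm M f"
  unfolding L2norm_def by (simp add: integral_nonneg)

lemma L2norm_sq: "(L2norm M f)\<^sup>2 = (\<integral>x. (norm (f x))\<^sup>2 \<partial>M)"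
  unfolding L2norm_def by (simp add: integral_nonneg)

lemma L2norm_abs_mult_le:
  fixes f g :: "'a \<Rightarrow> real"
  assumes [measurable]: "f \<in> borel_measurable M" "g \<in> borel_measurable M"
    and "integrable M (\<lambda>x. (f x)\<^sup>2)" "integrable M (\<lambda>x. (g x)\<^sup>2)"
  shows "(\<integral>x. \<bar>f x\<bar> * \<bar>g x\<bar> \<partial>M) \<le> L2norm M f * L2norm M g"
proof -
  have "integrable M (\<lambda>x. \<bar>f x\<bar> * \<bar>g x\<bar>)"
  proof (rule Bochner_Integration.integrable_bound[where f="\<lambda>x. (f x)\<^sup>2 + (g x)\<^sup>2"])
    show "integrable M (\<lambda>x. (f x)\<^sup>2 + (g x)\<^sup>2)"
      using assms by simp
    have "\<bar>f x\<bar> * \<bar>g x\<bar> \<le> (f x)\<^sup>2 + (g x)\<^sup>2" for x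
      using sum_squares_bound[of "\<bar>f x\<bar>" "\<bar>g x\<bar>"] mult_nonneg_nonneg[of "\<bar>f x\<bar>" "\<bar>g x\<bar>"]
      by (simp only: power2_abs mult.assoc) linarith
    then show "AE x in M. norm (\<bar>f x\<bar> * \<bar>g x\<bar>) \<le> norm ((f x)\<^sup>2 + (g x)\<^sup>2)"
      by simp
  qed measurable
  then have "ennreal ((\<integral>x. \<bar>f x\<bar> * \<bar>g x\<bar> \<partial>M)\<^sup>2) = (\<integral>\<^sup>+x. ennreal \<bar>f x\<bar> * ennreal \<bar>g x\<bar> \<partial>M)\<^sup>2"
    by (simp add: nn_integral_eq_integral integral_nonneg ennreal_power ennreal_mult[symmetric])
  also have "\<dots> \<le> (\<integral>\<^sup>+x. ennreal \<bar>f x\<bar> ^ 2 \<partial>M) * (\<integral>\<^sup>+x. ennreal \<bar>g x\<bar> ^ 2 \<partial>M)"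
    by (rule Cauchy_Schwarz_nn_integral) measurable
  also have "\<dots> = ennreal ((\<integral>x. (f x)\<^sup>2 \<partial>M) * (\<integral>x. (g x)\<^sup>2 \<partial>M))"
    using assms by (simp add: nn_integral_eq_integral integral_nonneg ennreal_power ennreal_mult[symmetric])
  finally have "(\<integral>x. \<bar>f x\<bar> * \<bar>g x\<bar> \<partial>M)\<^sup>2 \<le> (\<integral>x. (f x)\<^sup>2 \<partial>M) * (\<integral>x. (g x)\<^sup>2 \<partial>M)"
    by (simp add: ennreal_le_iff integral_nonneg)
  then show ?thesis
    unfolding L2norm_def real_norm_def power2_abs real_sqrt_mult[symmetric] by (rule real_le_rsqrt)
qed

lemma norm_inverse_le_of_resolvent_eqs:
  fixes u v z \<alpha> \<beta> :: "'a::real_normed_field"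
  assumes "- 1 / u = z + \<alpha>" "- 1 / v = z + \<beta>"
  shows "1 / norm v \<le> 1 / norm u + norm (\<alpha> - \<beta>)"
proof -
  have "1 / v = 1 / u + (\<alpha> - \<beta>)"
    using assms by simp algebra
  then have "norm (1 / v) \<le> norm (1 / u) + norm (\<alpha> - \<beta>)"
    by (metis norm_triangle_ineq)
  then show ?thesis
    by (simp add: norm_divide)
qed

lemma (in prob_space) integrable_norm_sq_if_bounded:
  fixes f :: "'a \<Rightarrow> 'b::{banach, second_countable_topology}"
  assumes [measurable]: "f \<in> borel_measurable M" and "\<And>x. x \<in> space M \<Longrightarrow> norm (f x) \<le> B"
  shows "integrable M (\<lambda>x. (norm (f x))\<^sup>2)"
proof (rule integrable_const_bound[where B="B\<^sup>2"])
  show "AE x in M. norm ((norm (f x))\<^sup>2) \<le> B\<^sup>2"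
    using assms(2) by (intro AE_I2) (simp add: power_mono)
qed measurable

lemma (in prob_space) L2norm_le_const:
  fixes f :: "'a \<Rightarrow> 'b::{banach, second_countable_topology}"
  assumes [measurable]: "f \<in> borel_measurable M" and "\<And>x. x \<in> space M \<Longrightarrow> norm (f x) \<le> B"
  shows "L2norm M f \<le> B"
proof -
  have "(\<integral>x. (norm (f x))\<^sup>2 \<partial>M) \<le> B\<^sup>2"
    using assms by (intro integral_le_const integrable_norm_sq_if_bounded AE_I2 power_mono) auto
  moreover obtain x where "x \<in> space M"
    using not_empty by blast
  then have "0 \<le> B"
    using order_trans[OF norm_ge_zero assms(2)] by blast
  ultimately show ?thesis
    unfolding L2norm_def by (simp add: real_le_lsqrt)
qed

definition inv_sq_profile :: "'a measure \<Rightarrow> ('a \<Rightarrow> 'a \<Rightarrow> real) \<Rightarrow> real \<Rightarrow> real" where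
  "inv_sq_profile M c \<tau> = (INF x\<in>space M. \<integral>y. 1 / (1/\<tau> + c x y)\<^sup>2 \<partial>M)"

locale bounded_kernel = prob_space M for M :: "'a measure" +
  fixes c :: "'a \<Rightarrow> 'a \<Rightarrow> real" and C :: real
  assumes kernel_measurable [measurable]: "x \<in> space M \<Longrightarrow> c x \<in> borel_measurable M"
    and kernel_nonneg: "x \<in> space M \<Longrightarrow> y \<in> space M \<Longrightarrow> 0 \<le> c x y"
    and kernel_le: "x \<in> space M \<Longrightarrow> y \<in> space M \<Longrightarrow> c x y \<le> C"
begin

lemma integrable_inverse_sq_shift:
  assumes "x \<in> space M" "0 < \<tau>"
  shows "integrable M (\<lambda>y. 1 / (1/\<tau> + c x y)\<^sup>2)"
proof (rule integrable_const_bound[where B="\<tau>\<^sup>2"])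
  show "AE y in M. norm (1 / (1/\<tau> + c x y)\<^sup>2) \<le> \<tau>\<^sup>2"
    using assms kernel_nonneg inverse_sq_shift_le_sq by (intro AE_I2) simp
qed (use assms in measurable)

lemma inv_sq_profile_le_integral:
  assumes "x \<in> space M" "0 < \<tau>"
  shows "inv_sq_profile M c \<tau> \<le> (\<integral>y. 1 / (1/\<tau> + c x y)\<^sup>2 \<partial>M)"
  unfolding inv_sq_profile_def
  by (rule cINF_lower[OF bdd_belowI2[where m=0]]) (auto simp: assms)

lemma inv_sq_profile_le_sq:
  assumes "0 < \<tau>"
  shows "inv_sq_profile M c \<tau> \<le> \<tau>\<^sup>2"
proof -
  obtain x where x: "x \<in> space M"
    using not_empty by blast
  have "(\<integral>y. 1 / (1/\<tau> + c x y)\<^sup>2 \<partial>M) \<le> \<tau>\<^sup>2"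
    using x assms kernel_nonneg inverse_sq_shift_le_sq
    by (intro integral_le_const integrable_inverse_sq_shift AE_I2) auto
  then show ?thesis
    using inv_sq_profile_le_integral[OF x assms] by linarith
qed

text \<open>The lower bound depends on \<open>c\<close> only through \<open>C\<close>; this is what keeps the
  infimum over \<open>x\<close> strictly increasing.\<close>

lemma inv_sq_profile_increment:
  assumes "0 < t" "t \<le> t'"
  shows "(t' - t) * t' / ((1 + C*t) * (1 + C*t')\<^sup>2) \<le> inv_sq_profile M c t' - inv_sq_profile M c t"
    and "inv_sq_profile M c t' - inv_sq_profile M c t \<le> t'\<^sup>2 - t\<^sup>2"
proof -
  have "0 < t'"
    using assms by linarith
  have diff: "(\<integral>y. 1 / (1/t' + c x y)\<^sup>2 \<partial>M) - (\<integral>y. 1 / (1/t + c x y)\<^sup>2 \<partial>M)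
      = (\<integral>y. 1 / (1/t' + c x y)\<^sup>2 - 1 / (1/t + c x y)\<^sup>2 \<partial>M)"
    and int: "integrable M (\<lambda>y. 1 / (1/t' + c x y)\<^sup>2 - 1 / (1/t + c x y)\<^sup>2)"
    if "x \<in> space M" for x
    using integrable_inverse_sq_shift[OF that \<open>0 < t'\<close>] integrable_inverse_sq_shift[OF that \<open>0 < t\<close>]
    by simp_all
  have bdd: "bdd_below ((\<lambda>x. \<integral>y. 1 / (1/\<tau> + c x y)\<^sup>2 \<partial>M) ` space M)" for \<tau>
    by (rule bdd_belowI2[where m=0]) simp
  have "(t' - t) * t' / ((1 + C*t) * (1 + C*t')\<^sup>2)
      \<le> (\<integral>y. 1 / (1/t' + c x y)\<^sup>2 \<partial>M) - (\<integral>y. 1 / (1/t + c x y)\<^sup>2 \<partial>M)"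
    and "(\<integral>y. 1 / (1/t' + c x y)\<^sup>2 \<partial>M) - (\<integral>y. 1 / (1/t + c x y)\<^sup>2 \<partial>M) \<le> t'\<^sup>2 - t\<^sup>2"
    if "x \<in> space M" for x
    unfolding diff[OF that]
    by (rule integral_ge_const[OF int[OF that]] integral_le_const[OF int[OF that]], rule AE_I2,
        rule inverse_sq_shift_increment_ge inverse_sq_shift_increment_le,
        use assms that kernel_nonneg kernel_le in auto)+
  then show "(t' - t) * t' / ((1 + C*t) * (1 + C*t')\<^sup>2) \<le> inv_sq_profile M c t' - inv_sq_profile M c t"
    "inv_sq_profile M c t' - inv_sq_profile M c t \<le> t'\<^sup>2 - t\<^sup>2"
    unfolding inv_sq_profile_def by (intro cINF_diff_bounds[OF not_empty bdd bdd]; blast)+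
qed

lemma kernel_bound_nonneg: "0 \<le> C"
  using not_empty kernel_nonneg kernel_le by (meson ex_in_conv order_trans)

lemma strict_mono_on_inv_sq_profile: "strict_mono_on {0<..} (inv_sq_profile M c)"
proof (rule strict_mono_onI)
  fix t t' :: real assume "t \<in> {0<..}" "t < t'"
  moreover have "0 < 1 + C*t" "0 < 1 + C*t'"
    using calculation kernel_bound_nonneg by (auto intro!: add_pos_nonneg)
  ultimately have "0 < (t' - t) * t' / ((1 + C*t) * (1 + C*t')\<^sup>2)"
    by (intro divide_pos_pos mult_pos_pos) auto
  then show "inv_sq_profile M c t < inv_sq_profile M c t'"
    using inv_sq_profile_increment(1)[of t t'] \<open>t \<in> {0<..}\<close> \<open>t < t'\<close> by simp
qed

lemma continuous_on_inv_sq_profile: "continuous_on {0<..} (inv_sq_profile M c)"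
proof (rule continuous_on_if_dist_le[where g=power2])
  show "continuous_on {0<..} (\<lambda>\<tau>::real. \<tau>\<^sup>2)"
    by (intro continuous_intros)
  have "dist (inv_sq_profile M c t) (inv_sq_profile M c t') \<le> dist (t\<^sup>2) (t'\<^sup>2)"
    if "0 < t" "t \<le> t'" for t t'
    using strict_mono_on_leD[OF strict_mono_on_inv_sq_profile] inv_sq_profile_increment(2)[OF that] that
    by (simp add: dist_real_def)
  then show "dist (inv_sq_profile M c t) (inv_sq_profile M c t') \<le> dist (t\<^sup>2) (t'\<^sup>2)"
    if "t \<in> {0<..}" "t' \<in> {0<..}" for t t'
    using that by (metis dist_commute greaterThan_iff linorder_le_cases)
qed

end

lemma Gamma_eq_inv_sq_profile:
  "Gamma M a s \<Phi> = inv_sq_profile M (\<lambda>x y. \<bar>a x - a y\<bar> + L2norm M (\<lambda>t. s x t - s y t) * \<Phi>)"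
  unfolding Gamma_def inv_sq_profile_def by (simp add: add.assoc)

locale qve_coefficients = prob_space M for M :: "'a measure" +
  fixes a :: "'a \<Rightarrow> real" and s :: "'a \<Rightarrow> 'a \<Rightarrow> real" and A K :: real
  assumes a_measurable [measurable]: "a \<in> borel_measurable M"
    and s_measurable [measurable]: "case_prod s \<in> borel_measurable (M \<Otimes>\<^sub>M M)"
    and a_bound: "x \<in> space M \<Longrightarrow> \<bar>a x\<bar> \<le> A"
    and s_bound: "x \<in> space M \<Longrightarrow> y \<in> space M \<Longrightarrow> \<bar>s x y\<bar> \<le> K"
begin

lemma s_row_measurable [measurable]: "x \<in> space M \<Longrightarrow> s x \<in> borel_measurable M"
  using measurable_Pair2[OF s_measurable] by simp

lemma row_diff_bound:
  "x \<in> space M \<Longrightarrow> y \<in> space M \<Longrightarrow> t \<in> space M \<Longrightarrow> \<bar>s x t - s y t\<bar> \<le> 2 * K"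
  using s_bound[of x t] s_bound[of y t] by simp

lemma L2norm_row_diff_le:
  "x \<in> space M \<Longrightarrow> y \<in> space M \<Longrightarrow> L2norm M (\<lambda>t. s x t - s y t) \<le> 2 * K"
  by (rule L2norm_le_const) (simp_all add: row_diff_bound)

lemma borel_measurable_L2norm_row_diff [measurable]:
  "x \<in> space M \<Longrightarrow> (\<lambda>y. L2norm M (\<lambda>t. s x t - s y t)) \<in> borel_measurable M"
  unfolding L2norm_def by measurable

lemma norm_Sop_diff_le:
  assumes [measurable]: "w \<in> borel_measurable M" and "bounded (w ` space M)"
    and "x \<in> space M" "y \<in> space M"
  shows "cmod (Sop M s w x - Sop M s w y) \<le> L2norm M (\<lambda>t. s x t - s y t) * L2norm M w"
proof -
  obtain W where W: "\<And>t. t \<in> space M \<Longrightarrow> cmod (w t) \<le> W"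
    using assms(2) unfolding bounded_iff by auto
  have "integrable M (\<lambda>t. complex_of_real (s u t) * w t)" if "u \<in> space M" for u
  proof (rule integrable_const_bound[where B="K * W"])
    show "AE t in M. norm (complex_of_real (s u t) * w t) \<le> K * W"
    proof (rule AE_I2)
      fix t assume t: "t \<in> space M"
      have "\<bar>s u t\<bar> * cmod (w t) \<le> K * W"
        using s_bound[OF that t] W[OF t] by (intro mult_mono) auto
      then show "norm (complex_of_real (s u t) * w t) \<le> K * W"
        by (simp add: norm_mult)
    qed
  qed (use that in measurable)
  then have "cmod (Sop M s w x - Sop M s w y) = cmod (\<integral>t. complex_of_real (s x t - s y t) * w t \<partial>M)"
    unfolding Sop_def using assms by (simp add: algebra_simps)
  also have "\<dots> \<le> (\<integral>t. norm (complex_of_real (s x t - s y t) * w t) \<partial>M)"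
    by (rule integral_norm_bound)
  also have "\<dots> = (\<integral>t. \<bar>s x t - s y t\<bar> * \<bar>cmod (w t)\<bar> \<partial>M)"
    by (simp only: norm_mult norm_of_real abs_norm_cancel)
  also have "\<dots> \<le> L2norm M (\<lambda>t. s x t - s y t) * L2norm M (\<lambda>t. cmod (w t))"
  proof (rule L2norm_abs_mult_le)
    show "integrable M (\<lambda>t. (s x t - s y t)\<^sup>2)"
      using integrable_norm_sq_if_bounded[of "\<lambda>t. s x t - s y t" "2 * K"] row_diff_bound assms
      by simp
    show "integrable M (\<lambda>t. (cmod (w t))\<^sup>2)"
      using integrable_norm_sq_if_bounded[OF assms(1) W] by simp
  qed (use assms in measurable)
  also have "L2norm M (\<lambda>t. cmod (w t)) = L2norm M w"
    unfolding L2norm_def by (simp add: integral_nonneg)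
  finally show ?thesis .
qed

lemma bounded_kernel_Gamma:
  assumes "0 \<le> \<Phi>"
  shows "bounded_kernel M (\<lambda>x y. \<bar>a x - a y\<bar> + L2norm M (\<lambda>t. s x t - s y t) * \<Phi>) (2*A + 2*K*\<Phi>)"
proof unfold_locales
  fix x assume x: "x \<in> space M"
  show "(\<lambda>y. \<bar>a x - a y\<bar> + L2norm M (\<lambda>t. s x t - s y t) * \<Phi>) \<in> borel_measurable M"
    using borel_measurable_L2norm_row_diff[OF x] by measurable
  fix y assume y: "y \<in> space M"
  show "0 \<le> \<bar>a x - a y\<bar> + L2norm M (\<lambda>t. s x t - s y t) * \<Phi>"
    by (intro add_nonneg_nonneg mult_nonneg_nonneg abs_ge_zero L2norm_nonneg assms)
  have "\<bar>a x - a y\<bar> \<le> 2*A"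
    using a_bound[OF x] a_bound[OF y] by linarith
  moreover have "L2norm M (\<lambda>t. s x t - s y t) * \<Phi> \<le> 2*K*\<Phi>"
    using L2norm_row_diff_le[OF x y] assms by (rule mult_right_mono)
  ultimately show "\<bar>a x - a y\<bar> + L2norm M (\<lambda>t. s x t - s y t) * \<Phi> \<le> 2*A + 2*K*\<Phi>"
    by linarith
qed

lemma
  assumes "0 \<le> \<Phi>"
  shows strict_mono_on_Gamma: "strict_mono_on {0<..} (Gamma M a s \<Phi>)"
    and continuous_on_Gamma: "continuous_on {0<..} (Gamma M a s \<Phi>)"
    and Gamma_le_sq: "0 < \<tau> \<Longrightarrow> Gamma M a s \<Phi> \<tau> \<le> \<tau>\<^sup>2"
proof -
  interpret bounded_kernel M "\<lambda>x y. \<bar>a x - a y\<bar> + L2norm M (\<lambda>t. s x t - s y t) * \<Phi>" "2*A + 2*K*\<Phi>"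
    using assms by (rule bounded_kernel_Gamma)
  show "strict_mono_on {0<..} (Gamma M a s \<Phi>)" "continuous_on {0<..} (Gamma M a s \<Phi>)"
    "0 < \<tau> \<Longrightarrow> Gamma M a s \<Phi> \<tau> \<le> \<tau>\<^sup>2"
    unfolding Gamma_eq_inv_sq_profile
    by (rule strict_mono_on_inv_sq_profile continuous_on_inv_sq_profile inv_sq_profile_le_sq)+
qed

lemma inverse_norm_solution_le:
  assumes "w \<in> borel_measurable M" "bounded (w ` space M)"
    and solution: "\<And>x. x \<in> space M \<Longrightarrow> - 1 / w x = z + complex_of_real (a x) + Sop M s w x"
    and x: "x \<in> space M" and y: "y \<in> space M"
  shows "1 / cmod (w y) \<le> 1 / cmod (w x) + (\<bar>a x - a y\<bar> + L2norm M (\<lambda>t. s x t - s y t) * L2norm M w)"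
proof -
  have "1 / cmod (w y) \<le> 1 / cmod (w x)
      + cmod (complex_of_real (a x) + Sop M s w x - (complex_of_real (a y) + Sop M s w y))"
    using norm_inverse_le_of_resolvent_eqs solution[OF x] solution[OF y] by (simp only: add.assoc)
  also have "complex_of_real (a x) + Sop M s w x - (complex_of_real (a y) + Sop M s w y)
      = complex_of_real (a x - a y) + (Sop M s w x - Sop M s w y)"
    by simp
  also have "cmod \<dots> \<le> cmod (complex_of_real (a x - a y)) + cmod (Sop M s w x - Sop M s w y)"
    by (rule norm_triangle_ineq)
  also have "\<dots> \<le> \<bar>a x - a y\<bar> + L2norm M (\<lambda>t. s x t - s y t) * L2norm M w"
    unfolding norm_of_real using norm_Sop_diff_le[OF assms(1,2) x y] by (rule add_left_mono)
  finally show ?thesis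
    by simp
qed

lemma Gamma_norm_solution_le:
  assumes [measurable]: "w \<in> borel_measurable M" and "bounded (w ` space M)"
    and nonzero: "\<And>x. x \<in> space M \<Longrightarrow> w x \<noteq> 0"
    and solution: "\<And>x. x \<in> space M \<Longrightarrow> - 1 / w x = z + complex_of_real (a x) + Sop M s w x"
    and "L2norm M w \<le> \<Phi>" and x: "x \<in> space M"
  shows "Gamma M a s \<Phi> (cmod (w x)) \<le> \<Phi>\<^sup>2"
proof -
  define c where "c = (\<lambda>x y. \<bar>a x - a y\<bar> + L2norm M (\<lambda>t. s x t - s y t) * \<Phi>)"
  have "0 \<le> \<Phi>"
    using \<open>L2norm M w \<le> \<Phi>\<close> L2norm_nonneg[of M w] by linarith
  then interpret bounded_kernel M c "2*A + 2*K*\<Phi>"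
    unfolding c_def by (rule bounded_kernel_Gamma)
  obtain W where W: "\<And>t. t \<in> space M \<Longrightarrow> cmod (w t) \<le> W"
    using assms(2) unfolding bounded_iff by auto
  have "0 < cmod (w x)"
    using nonzero[OF x] by simp
  have "1 / (1 / cmod (w x) + c x y)\<^sup>2 \<le> (cmod (w y))\<^sup>2" if y: "y \<in> space M" for y
  proof (rule inverse_sq_shift_le_sq_of_inverse_le)
    have "1 / cmod (w y) \<le> 1 / cmod (w x) + (\<bar>a x - a y\<bar> + L2norm M (\<lambda>t. s x t - s y t) * L2norm M w)"
      by (rule inverse_norm_solution_le[OF assms(1,2) solution x y])
    also have "\<dots> \<le> 1 / cmod (w x) + c x y"
      unfolding c_def by (intro add_left_mono mult_left_mono \<open>L2norm M w \<le> \<Phi>\<close> L2norm_nonneg)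
    finally show "1 / cmod (w y) \<le> 1 / cmod (w x) + c x y" .
  qed (simp_all add: \<open>0 < cmod (w x)\<close> nonzero y x kernel_nonneg)
  then have "(\<integral>y. 1 / (1 / cmod (w x) + c x y)\<^sup>2 \<partial>M) \<le> (\<integral>y. (cmod (w y))\<^sup>2 \<partial>M)"
    by (intro integral_mono integrable_inverse_sq_shift x \<open>0 < cmod (w x)\<close>
        integrable_norm_sq_if_bounded[OF assms(1) W]) auto
  also have "\<dots> = (L2norm M w)\<^sup>2"
    by (simp add: L2norm_sq)
  also have "\<dots> \<le> \<Phi>\<^sup>2"
    using \<open>L2norm M w \<le> \<Phi>\<close> L2norm_nonneg by (rule power_mono)
  finally show ?thesis
    using inv_sq_profile_le_integral[OF x \<open>0 < cmod (w x)\<close>]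
    unfolding Gamma_eq_inv_sq_profile c_def[symmetric] by linarith
qed

end

theorem mainTheorem6:
  fixes M :: "'a measure" and a :: "'a \<Rightarrow> real" and s :: "'a \<Rightarrow> 'a \<Rightarrow> real"
    and m :: "complex \<Rightarrow> 'a \<Rightarrow> complex" and z :: complex and \<Phi> :: real
  assumes "prob_space M"
    and "a \<in> borel_measurable M" and "bounded (a ` space M)"
    and "(\<lambda>(x, y). s x y) \<in> borel_measurable (M \<Otimes>\<^sub>M M)"
    and "bounded ((\<lambda>(x, y). s x y) ` (space M \<times> space M))"
    and "\<And>x y. x \<in> space M \<Longrightarrow> y \<in> space M \<Longrightarrow> s x y \<ge> 0"
    and "\<And>x y. x \<in> space M \<Longrightarrow> y \<in> space M \<Longrightarrow> s x y = s y x"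
    and m_sol: "\<And>w. Im w > 0 \<Longrightarrow>
            m w \<in> borel_measurable M \<and> bounded (m w ` space M) \<and>
            (\<forall>x\<in>space M. Im (m w x) > 0 \<and> - 1 / m w x = w + complex_of_real (a x) + Sop M s (m w) x)"
    and "Im z > 0" and "\<Phi> > 0"
    and "L2norm M (m z) \<le> \<Phi>"
    and "\<exists>L::ereal. ((\<lambda>\<tau>. ereal (Gamma M a s \<Phi> \<tau>)) \<longlongrightarrow> L) at_top \<and> L > ereal (\<Phi>\<^sup>2)"
  shows "supnorm M (m z) \<le> inv_into {0<..} (Gamma M a s \<Phi>) (\<Phi>\<^sup>2)"
proof -
  interpret prob_space M by fact
  obtain A where "\<And>x. x \<in> space M \<Longrightarrow> \<bar>a x\<bar> \<le> A"
    using assms(3) unfolding bounded_iff by auto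
  moreover obtain K where "\<And>x y. x \<in> space M \<Longrightarrow> y \<in> space M \<Longrightarrow> \<bar>s x y\<bar> \<le> K"
    using assms(5) unfolding bounded_iff by fastforce
  ultimately interpret qve_coefficients M a s A K
    using assms(2,4) by unfold_locales auto
  have m: "m z \<in> borel_measurable M" "bounded (m z ` space M)"
    and m_eq: "\<And>x. x \<in> space M \<Longrightarrow> Im (m z x) > 0 \<and> - 1 / m z x = z + complex_of_real (a x) + Sop M s (m z) x"
    using m_sol[OF \<open>Im z > 0\<close>] by auto
  obtain T where "0 < T" "\<Phi>\<^sup>2 < Gamma M a s \<Phi> T"
    using assms(12) exists_gt_of_tendsto_ereal by blast
  have "Gamma M a s \<Phi> (\<Phi>/2) \<le> (\<Phi>/2)\<^sup>2"
    using \<open>\<Phi> > 0\<close> by (intro Gamma_le_sq) auto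
  also have "\<dots> < \<Phi>\<^sup>2"
    using \<open>\<Phi> > 0\<close> by (simp add: power_divide)
  finally have "Gamma M a s \<Phi> (\<Phi>/2) < \<Phi>\<^sup>2" .
  show ?thesis
    unfolding supnorm_def
  proof (rule cSUP_least[OF not_empty])
    fix x assume x: "x \<in> space M"
    then have "m z x \<noteq> 0"
      using m_eq by fastforce
    show "cmod (m z x) \<le> inv_into {0<..} (Gamma M a s \<Phi>) (\<Phi>\<^sup>2)"
    proof (rule le_inv_into_if_strict_mono_on[where \<epsilon>="\<Phi>/2" and T=T])
      show "Gamma M a s \<Phi> (cmod (m z x)) \<le> \<Phi>\<^sup>2"
        using m_eq by (intro Gamma_norm_solution_le[OF m _ _ \<open>L2norm M (m z) \<le> \<Phi>\<close> x]) force+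
    qed (use \<open>\<Phi> > 0\<close> \<open>m z x \<noteq> 0\<close> \<open>0 < T\<close> \<open>\<Phi>\<^sup>2 < Gamma M a s \<Phi> T\<close>
          \<open>Gamma M a s \<Phi> (\<Phi>/2) < \<Phi>\<^sup>2\<close> strict_mono_on_Gamma continuous_on_Gamma in auto)
  qed
qed

end
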